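(* Let $(\varphi,\mathcal A,V)$ be a linear system with $V\neq\{0\}$. If $\ker\varphi$ contains a nonzero left ideal of $\mathcal A$, then the universal dilation of $(\varphi,\mathcal A,V)$ is not equivalent to its principle (canonical) dilation.
   Context: Fix a field $\mathbb F$; all algebras and vector spaces are over $\mathbb F$, and $L(X)$ is the algebra of linear maps $X\to X$. A linear system $(\varphi,\mathcal A,V)$: $\mathcal A$ a unital associative algebra with unit $I$, $V$ a vector space, $\varphi:\mathcal A\to L(V)$ linear with $\varphi(I)=\mathrm{id}_V$. A homomorphism dilation system $(\pi,S,T,W)$: $W$ a vector space, $\pi:\mathcal A\to L(W)$ a unital homomorphism, $T:V\to W$ injective linear, $S:W\to V$ surjective linear, $\varphi(a)=S\pi(a)T$ for all $a$. Two linearly minimal systems (i.e. with $W=\mathrm{span}\{\pi(a)Tv\}$) are equivalent if there is a bijective linear $R:W_1\to W_2$ with $RT_1=T_2$, $S_2R=S_1$, $\pi_1(a)=R^{-1}\pi_2(a)R$ for all $a$. The universal dilation is $(\pi_u,S_u,T_u,\mathcal A\otimes V)$ with $\pi_u(a)(b\otimes x)=(ab)\otimes x$, $T_ux=I\otimes x$, $S_u(a\otimes x)=\varphi(a)x$. Canonical dilation: $\alpha_{a,x}\in L(\mathcal A,V)$, $\alpha_{a,x}(b)=\varphi(ba)x$; $W_c=\mathrm{span}\{\alpha_{a,x}\}$; $\pi_c(a)\alpha_{b,x}=\alpha_{ab,x}$; $T_cx=\alpha_{I,x}$; $S_c(\alpha_{a,x})=\varphi(a)x$. *)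

theory Defs
  imports Complex_Main "HOL-Library.Function_Algebras"
begin

definition unital_algebra :: "('f::field \<Rightarrow> 'a::ring_1 \<Rightarrow> 'a) \<Rightarrow> bool" where
  "unital_algebra sA \<longleftrightarrow> vector_space sA \<and>
     (\<forall>c a b. sA c (a * b) = sA c a * b \<and> sA c (a * b) = a * sA c b)"

text \<open>Linear system (phi, A, V): V is the whole type 'v with scalar multiplication sV,
 phi : A -> L(V) linear, each phi a linear, phi(1) = id.\<close>
definition linear_system ::
  "('f::field \<Rightarrow> 'a::ring_1 \<Rightarrow> 'a) \<Rightarrow> ('f \<Rightarrow> 'v::ab_group_add \<Rightarrow> 'v) \<Rightarrow> ('a \<Rightarrow> 'v \<Rightarrow> 'v) \<Rightarrow> bool" where
  "linear_system sA sV phi \<longleftrightarrow> unital_algebra sA \<and> vector_space sV \<and>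
     (\<forall>a. \<forall>x y. phi a (x + y) = phi a x + phi a y) \<and>
     (\<forall>a. \<forall>c x. phi a (sV c x) = sV c (phi a x)) \<and>
     (\<forall>a b x. phi (a + b) x = phi a x + phi b x) \<and>
     (\<forall>c a x. phi (sA c a) x = sV c (phi a x)) \<and>
     phi 1 = id"

definition left_ideal :: "('f \<Rightarrow> 'a::ring_1 \<Rightarrow> 'a) \<Rightarrow> 'a set \<Rightarrow> bool" where
  "left_ideal sA J \<longleftrightarrow> 0 \<in> J \<and> (\<forall>x\<in>J. \<forall>y\<in>J. x + y \<in> J) \<and>
     (\<forall>c. \<forall>x\<in>J. sA c x \<in> J) \<and> (\<forall>a. \<forall>x\<in>J. a * x \<in> J)"

definition ker_sys :: "('a \<Rightarrow> 'v \<Rightarrow> 'v::zero) \<Rightarrow> 'a set" where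
  "ker_sys phi = {a. phi a = (\<lambda>x. 0)}"

text \<open>A dilation system is given by its space W (a carrier set inside some type, with
 addition add and scalar multiplication sc), pi, S and T.\<close>
definition dil_equiv ::
  "'w1 set \<Rightarrow> ('w1 \<Rightarrow> 'w1 \<Rightarrow> 'w1) \<Rightarrow> ('f \<Rightarrow> 'w1 \<Rightarrow> 'w1) \<Rightarrow>
   ('a \<Rightarrow> 'w1 \<Rightarrow> 'w1) \<Rightarrow> ('w1 \<Rightarrow> 'v) \<Rightarrow> ('v \<Rightarrow> 'w1) \<Rightarrow>
   'w2 set \<Rightarrow> ('w2 \<Rightarrow> 'w2 \<Rightarrow> 'w2) \<Rightarrow> ('f \<Rightarrow> 'w2 \<Rightarrow> 'w2) \<Rightarrow>
   ('a \<Rightarrow> 'w2 \<Rightarrow> 'w2) \<Rightarrow> ('w2 \<Rightarrow> 'v) \<Rightarrow> ('v \<Rightarrow> 'w2) \<Rightarrow> bool" where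
  "dil_equiv W1 add1 sc1 pi1 S1 T1 W2 add2 sc2 pi2 S2 T2 \<longleftrightarrow>
    (\<exists>R. bij_betw R W1 W2 \<and>
         (\<forall>x\<in>W1. \<forall>y\<in>W1. R (add1 x y) = add2 (R x) (R y)) \<and>
         (\<forall>c. \<forall>x\<in>W1. R (sc1 c x) = sc2 c (R x)) \<and>
         (\<forall>v. R (T1 v) = T2 v) \<and>
         (\<forall>w\<in>W1. S2 (R w) = S1 w) \<and>
         (\<forall>a. \<forall>w\<in>W1. pi1 a w = the_inv_into W1 R (pi2 a (R w))))"

text \<open>Free vector space on A \<times> V: finitely supported functions, modulo the span of the
 bilinearity relations.  Elements of A \<otimes> V are cosets.\<close>

definition fscale :: "'f::field \<Rightarrow> ('p \<Rightarrow> 'f) \<Rightarrow> ('p \<Rightarrow> 'f)" where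
  "fscale c u = (\<lambda>p. c * u p)"

definition free_sp :: "('p \<Rightarrow> 'f::field) set" where
  "free_sp = {u. finite {p. u p \<noteq> 0}}"

definition delta :: "'p \<Rightarrow> ('p \<Rightarrow> 'f::field)" where
  "delta p = (\<lambda>q. if q = p then 1 else 0)"

definition tens_gens :: "('f::field \<Rightarrow> 'a::ring_1 \<Rightarrow> 'a) \<Rightarrow> ('f \<Rightarrow> 'v::ab_group_add \<Rightarrow> 'v)
     \<Rightarrow> ('a \<times> 'v \<Rightarrow> 'f) set" where
  "tens_gens sA sV =
     {delta (a + b, x) - delta (a, x) - delta (b, x) | a b x. True} \<union>
     {delta (a, x + y) - delta (a, x) - delta (a, y) | a x y. True} \<union>
     {delta (sA c a, x) - fscale c (delta (a, x)) | c a x. True} \<union>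
     {delta (a, sV c x) - fscale c (delta (a, x)) | c a x. True}"

definition tens_null :: "('f::field \<Rightarrow> 'a::ring_1 \<Rightarrow> 'a) \<Rightarrow> ('f \<Rightarrow> 'v::ab_group_add \<Rightarrow> 'v)
     \<Rightarrow> ('a \<times> 'v \<Rightarrow> 'f) set" where
  "tens_null sA sV = module.span fscale (tens_gens sA sV)"

definition coset :: "('p \<Rightarrow> 'f::field) set \<Rightarrow> ('p \<Rightarrow> 'f) \<Rightarrow> ('p \<Rightarrow> 'f) set" where
  "coset N u = (\<lambda>n. u + n) ` N"

definition tens_space :: "('f::field \<Rightarrow> 'a::ring_1 \<Rightarrow> 'a) \<Rightarrow> ('f \<Rightarrow> 'v::ab_group_add \<Rightarrow> 'v)
     \<Rightarrow> ('a \<times> 'v \<Rightarrow> 'f) set set" where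
  "tens_space sA sV = coset (tens_null sA sV) ` free_sp"

definition tens :: "('f::field \<Rightarrow> 'a::ring_1 \<Rightarrow> 'a) \<Rightarrow> ('f \<Rightarrow> 'v::ab_group_add \<Rightarrow> 'v)
     \<Rightarrow> 'a \<Rightarrow> 'v \<Rightarrow> ('a \<times> 'v \<Rightarrow> 'f) set" where
  "tens sA sV a x = coset (tens_null sA sV) (delta (a, x))"

definition tens_add :: "('p \<Rightarrow> 'f::field) set \<Rightarrow> ('p \<Rightarrow> 'f) set \<Rightarrow> ('p \<Rightarrow> 'f) set" where
  "tens_add X Y = {x + y | x y. x \<in> X \<and> y \<in> Y}"

definition tens_scale :: "('f::field \<Rightarrow> 'a::ring_1 \<Rightarrow> 'a) \<Rightarrow> ('f \<Rightarrow> 'v::ab_group_add \<Rightarrow> 'v)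
     \<Rightarrow> 'f \<Rightarrow> ('a \<times> 'v \<Rightarrow> 'f) set \<Rightarrow> ('a \<times> 'v \<Rightarrow> 'f) set" where
  "tens_scale sA sV c X = {fscale c x + n | x n. x \<in> X \<and> n \<in> tens_null sA sV}"

text \<open>Linear map on the free space induced by (b, x) \<mapsto> (a b, x).\<close>
definition lmul_free :: "'a::ring_1 \<Rightarrow> ('a \<times> 'v \<Rightarrow> 'f::field) \<Rightarrow> ('a \<times> 'v \<Rightarrow> 'f)" where
  "lmul_free a u = (\<lambda>q. \<Sum>p\<in>{p. u p \<noteq> 0 \<and> (a * fst p, snd p) = q}. u p)"

text \<open>pi_u(a)(b \<otimes> x) = (a b) \<otimes> x, extended linearly.\<close>
definition pi_u :: "('f::field \<Rightarrow> 'a::ring_1 \<Rightarrow> 'a) \<Rightarrow> ('f \<Rightarrow> 'v::ab_group_add \<Rightarrow> 'v)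
     \<Rightarrow> 'a \<Rightarrow> ('a \<times> 'v \<Rightarrow> 'f) set \<Rightarrow> ('a \<times> 'v \<Rightarrow> 'f) set" where
  "pi_u sA sV a X = {lmul_free a x + n | x n. x \<in> X \<and> n \<in> tens_null sA sV}"

text \<open>S_u(a \<otimes> x) = phi(a) x, extended linearly (computed on a representative).\<close>
definition S_u :: "('f::field \<Rightarrow> 'v::ab_group_add \<Rightarrow> 'v) \<Rightarrow> ('a \<Rightarrow> 'v \<Rightarrow> 'v)
     \<Rightarrow> ('a \<times> 'v \<Rightarrow> 'f) set \<Rightarrow> 'v" where
  "S_u sV phi X = (let u = (SOME u. u \<in> X) in
      \<Sum>p\<in>{p. u p \<noteq> 0}. sV (u p) (phi (fst p) (snd p)))"

definition T_u :: "('f::field \<Rightarrow> 'a::ring_1 \<Rightarrow> 'a) \<Rightarrow> ('f \<Rightarrow> 'v::ab_group_add \<Rightarrow> 'v)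
     \<Rightarrow> 'v \<Rightarrow> ('a \<times> 'v \<Rightarrow> 'f) set" where
  "T_u sA sV x = tens sA sV 1 x"

definition lscale :: "('f \<Rightarrow> 'v \<Rightarrow> 'v) \<Rightarrow> 'f \<Rightarrow> ('a \<Rightarrow> 'v) \<Rightarrow> ('a \<Rightarrow> 'v)" where
  "lscale sV c f = (\<lambda>b. sV c (f b))"

definition alpha :: "('a::ring_1 \<Rightarrow> 'v \<Rightarrow> 'v) \<Rightarrow> 'a \<Rightarrow> 'v \<Rightarrow> ('a \<Rightarrow> 'v)" where
  "alpha phi a x = (\<lambda>b. phi (b * a) x)"

definition W_c :: "('f::field \<Rightarrow> 'v::ab_group_add \<Rightarrow> 'v) \<Rightarrow> ('a::ring_1 \<Rightarrow> 'v \<Rightarrow> 'v)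
     \<Rightarrow> ('a \<Rightarrow> 'v) set" where
  "W_c sV phi = module.span (lscale sV) {alpha phi a x | a x. True}"

text \<open>pi_c(a) alpha_{b,x} = alpha_{ab,x}; its linear extension is f \<mapsto> (c \<mapsto> f (c a)).\<close>
definition pi_c :: "'a::ring_1 \<Rightarrow> ('a \<Rightarrow> 'v) \<Rightarrow> ('a \<Rightarrow> 'v)" where
  "pi_c a f = (\<lambda>b. f (b * a))"

definition T_c :: "('a::ring_1 \<Rightarrow> 'v \<Rightarrow> 'v) \<Rightarrow> 'v \<Rightarrow> ('a \<Rightarrow> 'v)" where
  "T_c phi x = alpha phi 1 x"

text \<open>S_c alpha_{a,x} = phi(a) x; its linear extension is evaluation at I.\<close>
definition S_c :: "('a::ring_1 \<Rightarrow> 'v) \<Rightarrow> 'v" where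
  "S_c f = f 1"

end

theory Submission
  imports Defs
begin

text \<open>Suppose \<open>R\<close> were an equivalence.  Pick \<open>j \<noteq> 0\<close> in the left ideal \<open>J \<subseteq> ker \<phi>\<close> and \<open>v \<noteq> 0\<close>.
  Since \<open>b j \<in> J\<close> for every \<open>b\<close>, \<open>\<pi>\<^sub>c(j) T\<^sub>c v = \<alpha>\<^sub>j\<^sub>,\<^sub>v = 0\<close>, so intertwining gives
  \<open>j \<otimes> v = \<pi>\<^sub>u(j) T\<^sub>u v = R\<^sup>-\<^sup>1 0 = 0\<close>.  But \<open>j \<otimes> v \<noteq> 0\<close>: for a functional \<open>f\<close> with
  \<open>f j = 1\<close>, the bilinear map \<open>(a, x) \<mapsto> f(a) x\<close> factors through \<open>A \<otimes> V\<close> and sends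
  \<open>j \<otimes> v\<close> to \<open>v\<close>.\<close>

lemma exists_linear_functional_eq_1:
  fixes sA :: "'f::field \<Rightarrow> 'a::ab_group_add \<Rightarrow> 'a"
  assumes "vector_space sA" and "j \<noteq> 0"
  shows "\<exists>f. Vector_Spaces.linear sA (*) f \<and> f j = 1"
proof -
  interpret vector_space_pair sA "(*) :: 'f \<Rightarrow> 'f \<Rightarrow> 'f"
    by (simp add: vector_space_pair_def assms(1)) (unfold_locales, auto simp: algebra_simps)
  have ind: "vs1.independent {j}"
    using assms(2) by (intro vs1.independent_insertI vs1.independent_empty) auto
  show ?thesis
    by (rule exI[of _ "construct {j} (\<lambda>_. 1)"])
       (simp add: linear_construct[OF ind] construct_basis[OF ind])
qed

lemma vector_space_fscale: "vector_space (fscale :: 'f::field \<Rightarrow> ('p \<Rightarrow> 'f) \<Rightarrow> ('p \<Rightarrow> 'f))"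
  by unfold_locales (auto simp: fscale_def fun_eq_iff algebra_simps)

lemma free_sp_closed:
  assumes "u \<in> free_sp" "w \<in> free_sp"
  shows "u + w \<in> free_sp" "u - w \<in> free_sp" "fscale c u \<in> free_sp"
  using assms unfolding free_sp_def
  by (auto intro: finite_subset[of _ "{p. u p \<noteq> 0} \<union> {p. w p \<noteq> 0}"]
                  finite_subset[of _ "{p. u p \<noteq> 0}"] simp: fscale_def)

lemma delta_in_free_sp: "delta p \<in> free_sp"
  by (auto simp: free_sp_def delta_def)

lemma zero_in_free_sp: "0 \<in> free_sp"
  by (auto simp: free_sp_def)

definition free_eval :: "('f::field \<Rightarrow> 'v::ab_group_add \<Rightarrow> 'v) \<Rightarrow> ('p \<Rightarrow> 'v) \<Rightarrow> ('p \<Rightarrow> 'f) \<Rightarrow> 'v" where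
  "free_eval sV B u = (\<Sum>p\<in>{p. u p \<noteq> 0}. sV (u p) (B p))"

context
  fixes sV :: "'f::field \<Rightarrow> 'v::ab_group_add \<Rightarrow> 'v" and B :: "'p \<Rightarrow> 'v"
  assumes vector_space_sV: "vector_space sV"
begin

interpretation V: vector_space sV by (rule vector_space_sV)

lemma free_eval_superset:
  assumes "finite F" "{p. u p \<noteq> 0} \<subseteq> F"
  shows "free_eval sV B u = (\<Sum>p\<in>F. sV (u p) (B p))"
  unfolding free_eval_def using assms by (intro sum.mono_neutral_left) auto

lemma free_eval_add:
  assumes "u \<in> free_sp" "w \<in> free_sp"
  shows "free_eval sV B (u + w) = free_eval sV B u + free_eval sV B w"
proof -
  let ?F = "{p. u p \<noteq> 0} \<union> {p. w p \<noteq> 0}"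
  have fin: "finite ?F" using assms by (auto simp: free_sp_def)
  have "free_eval sV B (u + w) = (\<Sum>p\<in>?F. sV ((u + w) p) (B p))"
    by (rule free_eval_superset[OF fin]) auto
  also have "\<dots> = (\<Sum>p\<in>?F. sV (u p) (B p)) + (\<Sum>p\<in>?F. sV (w p) (B p))"
    by (simp add: V.scale_left_distrib sum.distrib)
  finally show ?thesis
    using free_eval_superset[OF fin, of u] free_eval_superset[OF fin, of w] by auto
qed

lemma free_eval_diff:
  assumes "u \<in> free_sp" "w \<in> free_sp"
  shows "free_eval sV B (u - w) = free_eval sV B u - free_eval sV B w"
proof -
  let ?F = "{p. u p \<noteq> 0} \<union> {p. w p \<noteq> 0}"
  have fin: "finite ?F" using assms by (auto simp: free_sp_def)
  have "free_eval sV B (u - w) = (\<Sum>p\<in>?F. sV ((u - w) p) (B p))"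
    by (rule free_eval_superset[OF fin]) auto
  also have "\<dots> = (\<Sum>p\<in>?F. sV (u p) (B p)) - (\<Sum>p\<in>?F. sV (w p) (B p))"
    by (simp add: V.scale_left_diff_distrib sum_subtractf)
  finally show ?thesis
    using free_eval_superset[OF fin, of u] free_eval_superset[OF fin, of w] by auto
qed

lemma free_eval_fscale:
  assumes "u \<in> free_sp"
  shows "free_eval sV B (fscale c u) = sV c (free_eval sV B u)"
proof -
  have fin: "finite {p. u p \<noteq> 0}" using assms by (auto simp: free_sp_def)
  have "free_eval sV B (fscale c u) = (\<Sum>p\<in>{p. u p \<noteq> 0}. sV (fscale c u p) (B p))"
    by (rule free_eval_superset[OF fin]) (auto simp: fscale_def)
  then show ?thesis
    by (simp add: V.scale_sum_right fscale_def free_eval_def)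
qed

lemma free_eval_delta: "free_eval sV B (delta p) = B p"
proof -
  have "free_eval sV B (delta p) = (\<Sum>q\<in>{p}. sV (delta p q) (B q))"
    by (rule free_eval_superset) (auto simp: delta_def)
  then show ?thesis by (simp add: delta_def)
qed

end

lemma free_eval_tens_null:
  fixes sA :: "'f::field \<Rightarrow> 'a::ring_1 \<Rightarrow> 'a"
    and sV :: "'f \<Rightarrow> 'v::ab_group_add \<Rightarrow> 'v"
    and B :: "'a \<times> 'v \<Rightarrow> 'v"
  assumes vV: "vector_space sV"
    and add_left: "\<And>a b x. B (a + b, x) = B (a, x) + B (b, x)"
    and add_right: "\<And>a x y. B (a, x + y) = B (a, x) + B (a, y)"
    and scale_left: "\<And>c a x. B (sA c a, x) = sV c (B (a, x))"
    and scale_right: "\<And>c a x. B (a, sV c x) = sV c (B (a, x))"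
    and "u \<in> tens_null sA sV"
  shows "free_eval sV B u = 0"
proof -
  interpret Fr: vector_space "fscale :: 'f \<Rightarrow> ('a \<times> 'v \<Rightarrow> 'f) \<Rightarrow> _"
    by (rule vector_space_fscale)
  interpret V: vector_space sV by (rule vV)
  define T where "T = {u \<in> free_sp. free_eval sV B u = 0}"
  have "free_eval sV B 0 = 0" by (simp add: free_eval_def)
  then have "Fr.subspace T"
    unfolding Fr.subspace_def T_def using free_sp_closed zero_in_free_sp
    by (auto simp del: plus_fun_apply simp: free_eval_add[OF vV] free_eval_fscale[OF vV])
  moreover have "tens_gens sA sV \<subseteq> T"
  proof -
    have eval3: "free_eval sV B (delta p1 - delta p2 - delta p3) = B p1 - B p2 - B p3" for p1 p2 p3
      by (simp del: minus_apply
          add: free_eval_diff[OF vV] free_sp_closed(2) delta_in_free_sp free_eval_delta[OF vV])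
    have eval2: "free_eval sV B (delta p1 - fscale c (delta p2)) = B p1 - sV c (B p2)" for p1 p2 c
      by (simp del: minus_apply add: free_eval_diff[OF vV] free_eval_fscale[OF vV]
          free_sp_closed(3)[where w=0] zero_in_free_sp delta_in_free_sp free_eval_delta[OF vV])
    have "delta p1 - delta p2 - delta p3 \<in> free_sp"
      and "delta p1 - fscale c (delta p2) \<in> free_sp" for p1 p2 p3 :: "'a \<times> 'v" and c
      by (intro free_sp_closed free_sp_closed(3)[where w=0] delta_in_free_sp zero_in_free_sp)+
    then show ?thesis
      unfolding tens_gens_def T_def
      by (auto simp del: minus_apply simp: eval3 eval2 add_left add_right scale_left scale_right)
  qed
  ultimately have "tens_null sA sV \<subseteq> T"
    unfolding tens_null_def by (rule Fr.span_minimal[rotated])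
  with assms(6) show ?thesis by (auto simp: T_def)
qed

lemma delta_notin_tens_null:
  fixes sA :: "'f::field \<Rightarrow> 'a::ring_1 \<Rightarrow> 'a"
    and sV :: "'f \<Rightarrow> 'v::ab_group_add \<Rightarrow> 'v"
  assumes vA: "vector_space sA" and vV: "vector_space sV" and "j \<noteq> 0" and "v \<noteq> 0"
  shows "delta (j, v) \<notin> tens_null sA sV"
proof
  assume null: "delta (j, v) \<in> tens_null sA sV"
  obtain f where f: "Vector_Spaces.linear sA (*) f" and fj: "f j = 1"
    using exists_linear_functional_eq_1[OF vA \<open>j \<noteq> 0\<close>] by blast
  interpret f: Vector_Spaces.linear sA "(*)" f by (rule f)
  interpret V: vector_space sV by (rule vV)
  have "free_eval sV (\<lambda>(a, x). sV (f a) x) (delta (j, v)) = 0"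
    by (rule free_eval_tens_null[OF vV _ _ _ _ null])
       (auto simp: f.add f.scale V.scale_left_distrib V.scale_right_distrib mult.commute)
  then show False
    using \<open>v \<noteq> 0\<close> by (simp add: free_eval_delta[OF vV] fj)
qed

lemma lmul_free_delta: "lmul_free a (delta (b, x)) = (delta (a * b, x) :: _ \<Rightarrow> 'f::field)"
proof
  fix q
  have "{p. (delta (b, x) :: _ \<Rightarrow> 'f) p \<noteq> 0 \<and> (a * fst p, snd p) = q}
      = (if q = (a * b, x) then {(b, x)} else {})"
    by (auto simp: delta_def)
  then show "lmul_free a (delta (b, x)) q = (delta (a * b, x) :: _ \<Rightarrow> 'f) q"
    by (simp add: lmul_free_def delta_def)
qed

lemma zero_in_tens_null: "0 \<in> tens_null sA sV"
proof -
  interpret Fr: vector_space "fscale :: 'f::field \<Rightarrow> ('a \<times> 'v \<Rightarrow> 'f) \<Rightarrow> _"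
    by (rule vector_space_fscale)
  show ?thesis unfolding tens_null_def by (rule Fr.span_zero)
qed

lemma delta_mem_pi_u_T_u: "delta (a, x) \<in> pi_u sA sV a (T_u sA sV x)"
proof -
  note null0 = zero_in_tens_null[of sA sV]
  then have "delta (1, x) \<in> T_u sA sV x"
    unfolding T_u_def tens_def coset_def by (rule image_eqI[rotated]) simp
  with null0 have "lmul_free a (delta (1, x)) + 0 \<in> pi_u sA sV a (T_u sA sV x)"
    unfolding pi_u_def by blast
  then show ?thesis by (simp add: lmul_free_delta)
qed

lemma pi_c_T_c_left_ideal_ker:
  assumes "left_ideal sA J" "J \<subseteq> ker_sys phi" "j \<in> J"
  shows "pi_c j (T_c phi v) = 0"
proof
  fix b
  have "b * j \<in> J" using assms(1,3) by (simp add: left_ideal_def)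
  then have "phi (b * j) = (\<lambda>x. 0)" using assms(2) by (auto simp: ker_sys_def)
  then show "pi_c j (T_c phi v) b = 0 b" by (simp add: pi_c_def T_c_def alpha_def)
qed

text \<open>The zero of \<open>A \<otimes> V\<close> is the coset \<open>tens_null\<close>; it goes to \<open>0\<close> because \<open>R\<close> commutes with
  scaling by \<open>0\<close>.\<close>
lemma dil_equiv_universal_canonical_pi_u_T_u:
  assumes "dil_equiv
            (tens_space sA sV) tens_add (tens_scale sA sV) (pi_u sA sV) (S_u sV phi) (T_u sA sV)
            (W_c sV phi) (+) (lscale sV) pi_c S_c (T_c phi)"
    and "vector_space sV" and "pi_c a (T_c phi v) = 0"
  shows "pi_u sA sV a (T_u sA sV v) = tens_null sA sV"
proof -
  interpret V: vector_space sV by fact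
  let ?N = "tens_null sA sV"
  obtain R where bij: "bij_betw R (tens_space sA sV) (W_c sV phi)"
    and scale: "\<forall>c. \<forall>x\<in>tens_space sA sV. R (tens_scale sA sV c x) = lscale sV c (R x)"
    and RT: "\<forall>v. R (T_u sA sV v) = T_c phi v"
    and pi: "\<forall>a. \<forall>w\<in>tens_space sA sV.
               pi_u sA sV a w = the_inv_into (tens_space sA sV) R (pi_c a (R w))"
    using assms(1) unfolding dil_equiv_def by blast
  note null0 = zero_in_tens_null[of sA sV]
  have N_space: "?N \<in> tens_space sA sV"
    unfolding tens_space_def by (rule image_eqI[OF _ zero_in_free_sp]) (simp add: coset_def)
  have "tens_scale sA sV 0 ?N = ?N"
    unfolding tens_scale_def using null0 by (auto simp: fscale_def zero_fun_def[symmetric])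
  then have "R ?N = lscale sV 0 (R ?N)"
    using scale N_space by metis
  then have RN: "R ?N = 0" by (simp add: lscale_def fun_eq_iff)
  have "T_u sA sV v \<in> tens_space sA sV"
    unfolding T_u_def tens_def tens_space_def by (rule imageI[OF delta_in_free_sp])
  then have "pi_u sA sV a (T_u sA sV v) = the_inv_into (tens_space sA sV) R (R ?N)"
    using pi RT RN assms(3) by simp
  also have "\<dots> = ?N"
    using bij N_space by (simp add: bij_betw_def the_inv_into_f_f)
  finally show ?thesis .
qed

theorem corollary4p2:
  fixes sA :: "'f::field \<Rightarrow> 'a::ring_1 \<Rightarrow> 'a"
    and sV :: "'f \<Rightarrow> 'v::ab_group_add \<Rightarrow> 'v"
    and phi :: "'a \<Rightarrow> 'v \<Rightarrow> 'v"
  assumes "linear_system sA sV phi"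
    and "\<exists>v::'v. v \<noteq> 0"
    and "\<exists>J. left_ideal sA J \<and> J \<noteq> {0} \<and> J \<subseteq> ker_sys phi"
  shows "\<not> dil_equiv
            (tens_space sA sV) tens_add (tens_scale sA sV) (pi_u sA sV) (S_u sV phi) (T_u sA sV)
            (W_c sV phi) (+) (lscale sV) pi_c S_c (T_c phi)"
proof
  assume equiv: "dil_equiv
            (tens_space sA sV) tens_add (tens_scale sA sV) (pi_u sA sV) (S_u sV phi) (T_u sA sV)
            (W_c sV phi) (+) (lscale sV) pi_c S_c (T_c phi)"
  have vA: "vector_space sA" and vV: "vector_space sV"
    using assms(1) by (auto simp: linear_system_def unital_algebra_def)
  obtain v :: 'v where v: "v \<noteq> 0" using assms(2) by blast
  obtain J where J: "left_ideal sA J" "J \<noteq> {0}" "J \<subseteq> ker_sys phi" using assms(3) by blast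
  then obtain j where j: "j \<in> J" "j \<noteq> 0" by (auto simp: left_ideal_def)
  have "pi_u sA sV j (T_u sA sV v) = tens_null sA sV"
    using dil_equiv_universal_canonical_pi_u_T_u[OF equiv vV pi_c_T_c_left_ideal_ker[OF J(1,3) j(1)]] .
  then have "delta (j, v) \<in> tens_null sA sV"
    using delta_mem_pi_u_T_u by metis
  then show False
    using delta_notin_tens_null[OF vA vV j(2) v] by blast
qed

end
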